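(* Let $(G,\alpha,\mathcal A)$ and $(G,\beta,\mathcal B)$ be unital $C^*$-dynamical systems of a locally compact group $G$, let $E$ be a $\mathcal B$-$\mathcal A$ Hilbert bimodule which is full with respect to both inner products, and let $\eta$ be a $(\beta,\alpha)$-compatible action of $G$ on $E$. If $\alpha$ or $\beta$ is outer, then $\eta$ is outer.
   Context: A $\mathcal B$-$\mathcal A$ Hilbert bimodule $E$ is a left Hilbert $\mathcal B$-module (inner product ${}_{\mathcal B}\langle\cdot,\cdot\rangle$, linear in the first variable) and right Hilbert $\mathcal A$-module (inner product $\langle\cdot,\cdot\rangle_{\mathcal A}$) with ${}_{\mathcal B}\langle x,y\rangle z=x\langle y,z\rangle_{\mathcal A}$. Full means the inner products span dense subsets of $\mathcal B$, resp. $\mathcal A$. A $(\beta,\alpha)$-compatible action is a homomorphism $g\mapsto\eta_g$ into invertible linear maps of $E$ with $\eta_g(bx)=\beta_g(b)\eta_g(x)$, $\eta_g(xa)=\eta_g(x)\alpha_g(a)$, ${}_{\mathcal B}\langle\eta_gx,\eta_gy\rangle=\beta_g({}_{\mathcal B}\langle x,y\rangle)$, $\langle\eta_gx,\eta_gy\rangle_{\mathcal A}=\alpha_g(\langle x,y\rangle_{\mathcal A})$, and $g\mapsto\eta_g(x)$ continuous. For unitaries $u\in\mathcal A$, $u'\in\mathcal B$, $\mathrm{Ad}(u',u)(x):=u'^*xu$. The action $\eta$ is outer if for every $t\in G\setminus\{e\}$, $\eta_t\neq\mathrm{Ad}(u',u)$ for all unitaries $u\in\mathcal A$, $u'\in\mathcal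 B$. An action $\alpha$ on a unital $C^*$-algebra $\mathcal A$ is outer if for every $t\ne e$, $\alpha_t$ is not of the form $a\mapsto u^*au$ for a unitary $u\in\mathcal A$. *)

theory Defs
  imports "HOL-Analysis.Analysis" "HOL-Algebra.Group"
begin

class complex_vector = real_vector +
  fixes scaleC :: "complex \<Rightarrow> 'a \<Rightarrow> 'a" (infixr \<open>*\<^sub>C\<close> 75)
  assumes scaleC_add_right: "c *\<^sub>C (x + y) = c *\<^sub>C x + c *\<^sub>C y"
    and scaleC_add_left: "(c + d) *\<^sub>C x = c *\<^sub>C x + d *\<^sub>C x"
    and scaleC_scaleC: "c *\<^sub>C (d *\<^sub>C x) = (c * d) *\<^sub>C x"
    and scaleC_one: "1 *\<^sub>C x = x"
    and scaleR_scaleC: "scaleR r x = complex_of_real r *\<^sub>C x"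

class complex_normed_vector = complex_vector + real_normed_vector +
  assumes norm_scaleC: "norm (c *\<^sub>C x) = cmod c * norm x"

class cstar_algebra_1 = complex_normed_vector + real_normed_algebra_1 + banach +
  fixes cstar :: "'a \<Rightarrow> 'a"
  assumes mult_scaleC_left: "(c *\<^sub>C x) * y = c *\<^sub>C (x * y)"
    and mult_scaleC_right: "x * (c *\<^sub>C y) = c *\<^sub>C (x * y)"
    and cstar_add: "cstar (x + y) = cstar x + cstar y"
    and cstar_scaleC: "cstar (c *\<^sub>C x) = cnj c *\<^sub>C cstar x"
    and cstar_mult: "cstar (x * y) = cstar y * cstar x"
    and cstar_cstar: "cstar (cstar x) = x"
    and cstar_identity: "norm (cstar x * x) = (norm x)\<^sup>2"

definition cpositive :: "'a::cstar_algebra_1 \<Rightarrow> bool" where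
  "cpositive a \<longleftrightarrow> (\<exists>b. a = cstar b * b)"

definition unitary :: "'a::cstar_algebra_1 \<Rightarrow> bool" where
  "unitary u \<longleftrightarrow> cstar u * u = 1 \<and> u * cstar u = 1"

definition clinear_map :: "('a::complex_vector \<Rightarrow> 'b::complex_vector) \<Rightarrow> bool" where
  "clinear_map f \<longleftrightarrow> (\<forall>x y. f (x + y) = f x + f y) \<and> (\<forall>c x. f (c *\<^sub>C x) = c *\<^sub>C f x)"

definition cspan :: "'a::complex_vector set \<Rightarrow> 'a set" where
  "cspan S = {\<Sum>s\<in>F. c s *\<^sub>C s | F c. finite F \<and> F \<subseteq> S}"

definition star_automorphism :: "('a::cstar_algebra_1 \<Rightarrow> 'a) \<Rightarrow> bool" where
  "star_automorphism f \<longleftrightarrow> bij f \<and> clinear_map f \<and> (\<forall>x y. f (x * y) = f x * f y)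
     \<and> (\<forall>x. f (cstar x) = cstar (f x))"

definition locally_compact_group :: "('g, 'm) monoid_scheme \<Rightarrow> 'g topology \<Rightarrow> bool" where
  "locally_compact_group G T \<longleftrightarrow> group G \<and> topspace T = carrier G
     \<and> Hausdorff_space T \<and> locally_compact_space T
     \<and> continuous_map (prod_topology T T) T (\<lambda>(x, y). x \<otimes>\<^bsub>G\<^esub> y)
     \<and> continuous_map T T (\<lambda>x. inv\<^bsub>G\<^esub> x)"

definition cstar_dynamical_system ::
  "('g, 'm) monoid_scheme \<Rightarrow> 'g topology \<Rightarrow> ('g \<Rightarrow> 'a::cstar_algebra_1 \<Rightarrow> 'a) \<Rightarrow> bool" where
  "cstar_dynamical_system G T \<alpha> \<longleftrightarrow> locally_compact_group G T
     \<and> (\<forall>g\<in>carrier G. star_automorphism (\<alpha> g))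
     \<and> (\<forall>g\<in>carrier G. \<forall>h\<in>carrier G. \<alpha> (g \<otimes>\<^bsub>G\<^esub> h) = \<alpha> g \<circ> \<alpha> h)
     \<and> \<alpha> \<one>\<^bsub>G\<^esub> = id
     \<and> (\<forall>a. continuous_map T euclidean (\<lambda>g. \<alpha> g a))"

definition outer_action ::
  "('g, 'm) monoid_scheme \<Rightarrow> ('g \<Rightarrow> 'a::cstar_algebra_1 \<Rightarrow> 'a) \<Rightarrow> bool" where
  "outer_action G \<alpha> \<longleftrightarrow> (\<forall>t\<in>carrier G. t \<noteq> \<one>\<^bsub>G\<^esub> \<longrightarrow>
      \<not> (\<exists>u. unitary u \<and> \<alpha> t = (\<lambda>a. cstar u * a * u)))"

definition ip_norm :: "('e \<Rightarrow> 'e \<Rightarrow> 'a::cstar_algebra_1) \<Rightarrow> 'e \<Rightarrow> real" where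
  "ip_norm ip x = sqrt (norm (ip x x))"

definition ip_complete :: "('e::complex_vector \<Rightarrow> 'e \<Rightarrow> 'a::cstar_algebra_1) \<Rightarrow> bool" where
  "ip_complete ip \<longleftrightarrow> (\<forall>X::nat \<Rightarrow> 'e.
      (\<forall>\<epsilon>>0. \<exists>N. \<forall>m\<ge>N. \<forall>n\<ge>N. ip_norm ip (X m - X n) < \<epsilon>)
      \<longrightarrow> (\<exists>L. (\<lambda>n. ip_norm ip (X n - L)) \<longlonglongrightarrow> 0))"

definition right_hilbert_module ::
  "('e::complex_vector \<Rightarrow> 'a::cstar_algebra_1 \<Rightarrow> 'e) \<Rightarrow> ('e \<Rightarrow> 'e \<Rightarrow> 'a) \<Rightarrow> bool" where
  "right_hilbert_module ract rip \<longleftrightarrow>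
     (\<forall>x y a. ract (x + y) a = ract x a + ract y a)
   \<and> (\<forall>x a b. ract x (a + b) = ract x a + ract x b)
   \<and> (\<forall>x a b. ract x (a * b) = ract (ract x a) b)
   \<and> (\<forall>x. ract x 1 = x)
   \<and> (\<forall>c x a. ract (c *\<^sub>C x) a = c *\<^sub>C ract x a \<and> ract x (c *\<^sub>C a) = c *\<^sub>C ract x a)
   \<and> (\<forall>x y z. rip x (y + z) = rip x y + rip x z)
   \<and> (\<forall>c x y. rip x (c *\<^sub>C y) = c *\<^sub>C rip x y)
   \<and> (\<forall>x y a. rip x (ract y a) = rip x y * a)
   \<and> (\<forall>x y. rip y x = cstar (rip x y))
   \<and> (\<forall>x. cpositive (rip x x))
   \<and> (\<forall>x. rip x x = 0 \<longrightarrow> x = 0)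
   \<and> ip_complete rip"

definition left_hilbert_module ::
  "('b::cstar_algebra_1 \<Rightarrow> 'e::complex_vector \<Rightarrow> 'e) \<Rightarrow> ('e \<Rightarrow> 'e \<Rightarrow> 'b) \<Rightarrow> bool" where
  "left_hilbert_module lact lip \<longleftrightarrow>
     (\<forall>b x y. lact b (x + y) = lact b x + lact b y)
   \<and> (\<forall>a b x. lact (a + b) x = lact a x + lact b x)
   \<and> (\<forall>a b x. lact (a * b) x = lact a (lact b x))
   \<and> (\<forall>x. lact 1 x = x)
   \<and> (\<forall>c b x. lact b (c *\<^sub>C x) = c *\<^sub>C lact b x \<and> lact (c *\<^sub>C b) x = c *\<^sub>C lact b x)
   \<and> (\<forall>x y z. lip (x + y) z = lip x z + lip y z)
   \<and> (\<forall>c x y. lip (c *\<^sub>C x) y = c *\<^sub>C lip x y)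
   \<and> (\<forall>b x y. lip (lact b x) y = b * lip x y)
   \<and> (\<forall>x y. lip y x = cstar (lip x y))
   \<and> (\<forall>x. cpositive (lip x x))
   \<and> (\<forall>x. lip x x = 0 \<longrightarrow> x = 0)
   \<and> ip_complete lip"

definition hilbert_bimodule ::
  "('b::cstar_algebra_1 \<Rightarrow> 'e::complex_vector \<Rightarrow> 'e) \<Rightarrow> ('e \<Rightarrow> 'a::cstar_algebra_1 \<Rightarrow> 'e)
   \<Rightarrow> ('e \<Rightarrow> 'e \<Rightarrow> 'b) \<Rightarrow> ('e \<Rightarrow> 'e \<Rightarrow> 'a) \<Rightarrow> bool" where
  "hilbert_bimodule lact ract lip rip \<longleftrightarrow>
     left_hilbert_module lact lip \<and> right_hilbert_module ract rip
   \<and> (\<forall>b x a. ract (lact b x) a = lact b (ract x a))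
   \<and> (\<forall>x y z. lact (lip x y) z = ract x (rip y z))"

definition full_bimodule ::
  "('e \<Rightarrow> 'e \<Rightarrow> 'b::cstar_algebra_1) \<Rightarrow> ('e \<Rightarrow> 'e \<Rightarrow> 'a::cstar_algebra_1) \<Rightarrow> bool" where
  "full_bimodule lip rip \<longleftrightarrow>
     closure (cspan (range (\<lambda>(x, y). lip x y))) = UNIV
   \<and> closure (cspan (range (\<lambda>(x, y). rip x y))) = UNIV"

text \<open>(beta, alpha)-compatible action of G on E.  Continuity of g \<mapsto> eta g x is
  taken with respect to the norm of E (induced by the A-valued inner product).\<close>
definition compatible_action ::
  "('g, 'm) monoid_scheme \<Rightarrow> 'g topology
   \<Rightarrow> ('b::cstar_algebra_1 \<Rightarrow> 'e::complex_vector \<Rightarrow> 'e) \<Rightarrow> ('e \<Rightarrow> 'a::cstar_algebra_1 \<Rightarrow> 'e)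
   \<Rightarrow> ('e \<Rightarrow> 'e \<Rightarrow> 'b) \<Rightarrow> ('e \<Rightarrow> 'e \<Rightarrow> 'a)
   \<Rightarrow> ('g \<Rightarrow> 'b \<Rightarrow> 'b) \<Rightarrow> ('g \<Rightarrow> 'a \<Rightarrow> 'a) \<Rightarrow> ('g \<Rightarrow> 'e \<Rightarrow> 'e) \<Rightarrow> bool" where
  "compatible_action G T lact ract lip rip \<beta> \<alpha> \<eta> \<longleftrightarrow>
     (\<forall>g\<in>carrier G. bij (\<eta> g) \<and> clinear_map (\<eta> g))
   \<and> (\<forall>g\<in>carrier G. \<forall>h\<in>carrier G. \<eta> (g \<otimes>\<^bsub>G\<^esub> h) = \<eta> g \<circ> \<eta> h)
   \<and> \<eta> \<one>\<^bsub>G\<^esub> = id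
   \<and> (\<forall>g\<in>carrier G. \<forall>b x. \<eta> g (lact b x) = lact (\<beta> g b) (\<eta> g x))
   \<and> (\<forall>g\<in>carrier G. \<forall>x a. \<eta> g (ract x a) = ract (\<eta> g x) (\<alpha> g a))
   \<and> (\<forall>g\<in>carrier G. \<forall>x y. lip (\<eta> g x) (\<eta> g y) = \<beta> g (lip x y))
   \<and> (\<forall>g\<in>carrier G. \<forall>x y. rip (\<eta> g x) (\<eta> g y) = \<alpha> g (rip x y))
   \<and> (\<forall>x. \<forall>g0\<in>carrier G. \<forall>\<epsilon>>0. \<exists>U. openin T U \<and> g0 \<in> U
          \<and> (\<forall>g\<in>U. ip_norm rip (\<eta> g x - \<eta> g0 x) < \<epsilon>))"

definition Ad :: "('b::cstar_algebra_1 \<Rightarrow> 'e \<Rightarrow> 'e) \<Rightarrow> ('e \<Rightarrow> 'a::cstar_algebra_1 \<Rightarrow> 'e)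
   \<Rightarrow> 'b \<Rightarrow> 'a \<Rightarrow> 'e \<Rightarrow> 'e" where
  "Ad lact ract u' u x = lact (cstar u') (ract x u)"

definition outer_bimodule_action ::
  "('g, 'm) monoid_scheme \<Rightarrow> ('b::cstar_algebra_1 \<Rightarrow> 'e \<Rightarrow> 'e) \<Rightarrow> ('e \<Rightarrow> 'a::cstar_algebra_1 \<Rightarrow> 'e)
   \<Rightarrow> ('g \<Rightarrow> 'e \<Rightarrow> 'e) \<Rightarrow> bool" where
  "outer_bimodule_action G lact ract \<eta> \<longleftrightarrow> (\<forall>t\<in>carrier G. t \<noteq> \<one>\<^bsub>G\<^esub> \<longrightarrow>
      (\<forall>u u'. unitary u \<and> unitary u' \<longrightarrow> \<eta> t \<noteq> Ad lact ract u' u))"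

end

theory Submission
  imports Defs
begin

text \<open>If \<open>\<eta>\<^sub>t = Ad(u', u)\<close>, the covariance \<open>\<eta>\<^sub>t(x a) = \<eta>\<^sub>t(x) \<alpha>\<^sub>t(a)\<close> becomes
  \<open>x (a u - u \<alpha>\<^sub>t(a)) = 0\<close> for every \<open>x \<in> E\<close>.  Pairing with \<open>E\<close> shows that
  \<open>a u - u \<alpha>\<^sub>t(a)\<close> annihilates every inner product \<open>\<langle>y, x\<rangle>\<^sub>A\<close>; by fullness their span
  contains an element \<open>c\<close> with \<open>\<parallel>1 - c\<parallel> < 1\<close>, which forces the annihilator to vanish.
  Hence \<open>\<alpha>\<^sub>t = Ad u\<close> is inner, and symmetrically \<open>\<beta>\<^sub>t = Ad u'\<close>.\<close>

lemma near_one_mult_eq_0_imp_eq_0: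
  fixes c d :: "'a::real_normed_algebra_1"
  assumes "norm (1 - c) < 1" "c * d = 0"
  shows "d = 0"
proof -
  have "d = (1 - c) * d" using assms(2) by (simp add: algebra_simps)
  then have "norm d \<le> norm (1 - c) * norm d" by (metis norm_mult_ineq)
  with assms(1) show ?thesis
    by (metis linorder_not_le mult_le_cancel_right1 norm_le_zero_iff)
qed

lemma mult_near_one_eq_0_imp_eq_0:
  fixes c d :: "'a::real_normed_algebra_1"
  assumes "norm (1 - c) < 1" "d * c = 0"
  shows "d = 0"
proof -
  have "d = d * (1 - c)" using assms(2) by (simp add: algebra_simps)
  then have "norm d \<le> norm d * norm (1 - c)" by (metis norm_mult_ineq)
  with assms(1) show ?thesis
    by (metis linorder_not_le mult.commute mult_le_cancel_right1 norm_le_zero_iff)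
qed

lemma dense_cspan_near_one:
  fixes S :: "'a::cstar_algebra_1 set"
  assumes "closure (cspan S) = UNIV"
  obtains F k where "F \<subseteq> S" "norm (1 - (\<Sum>s\<in>F. k s *\<^sub>C s)) < 1"
proof -
  have "1 \<in> closure (cspan S)" using assms by simp
  then obtain c where "c \<in> cspan S" "dist c 1 < 1"
    by (meson closure_approachable zero_less_one)
  then show ?thesis using that unfolding cspan_def by (auto simp: dist_norm norm_minus_commute)
qed

lemma scaleC_zero [simp]: "c *\<^sub>C (0::'a::complex_vector) = 0"
  by (rule additive.zero) (unfold_locales, rule scaleC_add_right)

lemma dense_cspan_right_annihilator_eq_0:
  fixes S :: "'a::cstar_algebra_1 set"
  assumes "closure (cspan S) = UNIV" and "\<And>s. s \<in> S \<Longrightarrow> s * d = 0"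
  shows "d = 0"
proof -
  obtain F k where F: "F \<subseteq> S" and near: "norm (1 - (\<Sum>s\<in>F. k s *\<^sub>C s)) < 1"
    using dense_cspan_near_one[OF assms(1)] .
  have "(\<Sum>s\<in>F. k s *\<^sub>C s) * d = (\<Sum>s\<in>F. k s *\<^sub>C (s * d))"
    by (simp add: sum_distrib_right mult_scaleC_left)
  also have "\<dots> = 0" using F assms(2) by (intro sum.neutral) auto
  finally show ?thesis using near near_one_mult_eq_0_imp_eq_0 by blast
qed

lemma dense_cspan_left_annihilator_eq_0:
  fixes S :: "'a::cstar_algebra_1 set"
  assumes "closure (cspan S) = UNIV" and "\<And>s. s \<in> S \<Longrightarrow> d * s = 0"
  shows "d = 0"
proof -
  obtain F k where F: "F \<subseteq> S" and near: "norm (1 - (\<Sum>s\<in>F. k s *\<^sub>C s)) < 1"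
    using dense_cspan_near_one[OF assms(1)] .
  have "d * (\<Sum>s\<in>F. k s *\<^sub>C s) = (\<Sum>s\<in>F. k s *\<^sub>C (d * s))"
    by (simp add: sum_distrib_left mult_scaleC_right)
  also have "\<dots> = 0" using F assms(2) by (intro sum.neutral) auto
  finally show ?thesis using near mult_near_one_eq_0_imp_eq_0 by blast
qed

lemma full_right_hilbert_module_faithful:
  assumes "right_hilbert_module ract rip"
    and "closure (cspan (range (\<lambda>(x, y). rip x y))) = UNIV"
    and "\<And>x. ract x a = ract x b"
  shows "a = b"
proof -
  \<comment> \<open>qualified name: HOL-Analysis's measure-theoretic \<open>additive\<close> shadows the locale\<close>
  from assms(1) have ract_additive: "Modules.additive (ract x)"
    and rip_additive: "Modules.additive (rip y)"
    and rip_ract: "rip y (ract x d) = rip y x * d" for x y d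
    unfolding right_hilbert_module_def by (meson additive.intro)+
  have "rip y x * (a - b) = 0" for x y
  proof -
    have "ract x (a - b) = 0"
      using additive.diff[OF ract_additive] assms(3) by simp
    then show ?thesis
      using rip_ract additive.zero[OF rip_additive] by metis
  qed
  then have "s * (a - b) = 0" if "s \<in> range (\<lambda>(x, y). rip x y)" for s
    using that by auto
  then have "a - b = 0"
    by (rule dense_cspan_right_annihilator_eq_0[OF assms(2)])
  then show ?thesis by simp
qed

lemma full_left_hilbert_module_faithful:
  assumes "left_hilbert_module lact lip"
    and "closure (cspan (range (\<lambda>(x, y). lip x y))) = UNIV"
    and "\<And>x. lact a x = lact b x"
  shows "a = b"
proof -
  from assms(1) have lact_additive: "Modules.additive (\<lambda>c. lact c x)"
    and lip_additive: "Modules.additive (\<lambda>x. lip x y)"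
    and lip_lact: "lip (lact d x) y = d * lip x y" for x y d
    unfolding left_hilbert_module_def by (meson additive.intro)+
  have "(a - b) * lip x y = 0" for x y
  proof -
    have "lact (a - b) x = 0"
      using additive.diff[OF lact_additive] assms(3) by simp
    then show ?thesis
      using lip_lact additive.zero[OF lip_additive] by metis
  qed
  then have "(a - b) * s = 0" if "s \<in> range (\<lambda>(x, y). lip x y)" for s
    using that by auto
  then have "a - b = 0"
    by (rule dense_cspan_left_annihilator_eq_0[OF assms(2)])
  then show ?thesis by simp
qed

lemma inner_if_Ad_right_covariant:
  assumes bimod: "hilbert_bimodule lact ract lip rip"
    and full: "closure (cspan (range (\<lambda>(x, y). rip x y))) = UNIV"
    and u: "unitary u" and u': "unitary u'"
    and cov: "\<And>x a. \<theta> (ract x a) = ract (\<theta> x) (\<sigma> a)"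
    and \<theta>: "\<theta> = Ad lact ract u' u"
  shows "\<sigma> = (\<lambda>a. cstar u * a * u)"
proof
  fix a
  from bimod have R: "right_hilbert_module ract rip" and L: "left_hilbert_module lact lip"
    and lact_ract: "\<And>b x a. ract (lact b x) a = lact b (ract x a)"
    unfolding hilbert_bimodule_def by blast+
  from R have r_mult: "\<And>x a b. ract x (a * b) = ract (ract x a) b"
    unfolding right_hilbert_module_def by meson
  from L have l_mult: "\<And>a b x. lact (a * b) x = lact a (lact b x)" and l_one: "\<And>x. lact 1 x = x"
    unfolding left_hilbert_module_def by meson+
  have lact_cancel: "lact (cstar u') z = lact (cstar u') z' \<Longrightarrow> z = z'" for z z'
    using u' unfolding unitary_def by (metis l_mult l_one)
  have "lact (cstar u') (ract x (a * u)) = lact (cstar u') (ract x (u * \<sigma> a))" for x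
  proof -
    have "lact (cstar u') (ract x (a * u)) = \<theta> (ract x a)"
      by (simp add: \<theta> Ad_def r_mult)
    also have "\<dots> = ract (\<theta> x) (\<sigma> a)"
      by (rule cov)
    also have "\<dots> = lact (cstar u') (ract x (u * \<sigma> a))"
      by (simp add: \<theta> Ad_def lact_ract r_mult)
    finally show ?thesis .
  qed
  then have "a * u = u * \<sigma> a"
    using full_right_hilbert_module_faithful[OF R full] lact_cancel by blast
  then show "\<sigma> a = cstar u * a * u"
    using u unfolding unitary_def by (metis mult.assoc mult_1_left)
qed

lemma inner_if_Ad_left_covariant:
  assumes bimod: "hilbert_bimodule lact ract lip rip"
    and full: "closure (cspan (range (\<lambda>(x, y). lip x y))) = UNIV"
    and u: "unitary u" and u': "unitary u'"
    and cov: "\<And>b x. \<theta> (lact b x) = lact (\<sigma> b) (\<theta> x)"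
    and \<theta>: "\<theta> = Ad lact ract u' u"
  shows "\<sigma> = (\<lambda>b. cstar u' * b * u')"
proof
  fix b
  from bimod have R: "right_hilbert_module ract rip" and L: "left_hilbert_module lact lip"
    and lact_ract: "\<And>b x a. ract (lact b x) a = lact b (ract x a)"
    unfolding hilbert_bimodule_def by blast+
  from L have l_mult: "\<And>a b x. lact (a * b) x = lact a (lact b x)"
    unfolding left_hilbert_module_def by meson
  from R have r_mult: "\<And>x a b. ract x (a * b) = ract (ract x a) b" and r_one: "\<And>x. ract x 1 = x"
    unfolding right_hilbert_module_def by meson+
  have ract_cstar_u_u: "ract (ract z (cstar u)) u = z" for z
    using u unfolding unitary_def by (metis r_mult r_one)
  have "lact (cstar u' * b) z = lact (\<sigma> b * cstar u') z" for z
  proof -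
    let ?x = "ract z (cstar u)"
    have "lact (cstar u' * b) z = \<theta> (lact b ?x)"
      by (simp add: \<theta> Ad_def lact_ract l_mult ract_cstar_u_u)
    also have "\<dots> = lact (\<sigma> b) (\<theta> ?x)"
      by (rule cov)
    also have "\<dots> = lact (\<sigma> b * cstar u') z"
      by (simp add: \<theta> Ad_def l_mult ract_cstar_u_u)
    finally show ?thesis .
  qed
  then have "cstar u' * b = \<sigma> b * cstar u'"
    by (rule full_left_hilbert_module_faithful[OF L full])
  then show "\<sigma> b = cstar u' * b * u'"
    using u' unfolding unitary_def by (metis mult.assoc mult_1_right)
qed

theorem proposition5p2:
  fixes G :: "('g, 'm) monoid_scheme" and T :: "'g topology"
    and \<alpha> :: "'g \<Rightarrow> 'a::cstar_algebra_1 \<Rightarrow> 'a"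
    and \<beta> :: "'g \<Rightarrow> 'b::cstar_algebra_1 \<Rightarrow> 'b"
    and lact :: "'b \<Rightarrow> 'e::complex_vector \<Rightarrow> 'e" and ract :: "'e \<Rightarrow> 'a \<Rightarrow> 'e"
    and lip :: "'e \<Rightarrow> 'e \<Rightarrow> 'b" and rip :: "'e \<Rightarrow> 'e \<Rightarrow> 'a"
    and \<eta> :: "'g \<Rightarrow> 'e \<Rightarrow> 'e"
  assumes "cstar_dynamical_system G T \<alpha>"
    and "cstar_dynamical_system G T \<beta>"
    and "hilbert_bimodule lact ract lip rip"
    and "full_bimodule lip rip"
    and "compatible_action G T lact ract lip rip \<beta> \<alpha> \<eta>"
    and "outer_action G \<alpha> \<or> outer_action G \<beta>"
  shows "outer_bimodule_action G lact ract \<eta>"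
  unfolding outer_bimodule_action_def
proof (intro ballI impI allI notI)
  fix t u u'
  assume t: "t \<in> carrier G" "t \<noteq> \<one>\<^bsub>G\<^esub>" and uu: "unitary u \<and> unitary u'"
    and Ad: "\<eta> t = Ad lact ract u' u"
  from assms(3,4) have bimod: "hilbert_bimodule lact ract lip rip"
    and full_l: "closure (cspan (range (\<lambda>(x, y). lip x y))) = UNIV"
    and full_r: "closure (cspan (range (\<lambda>(x, y). rip x y))) = UNIV"
    unfolding full_bimodule_def by blast+
  from assms(5) t(1) have cov_r: "\<And>x a. \<eta> t (ract x a) = ract (\<eta> t x) (\<alpha> t a)"
    and cov_l: "\<And>b x. \<eta> t (lact b x) = lact (\<beta> t b) (\<eta> t x)"
    unfolding compatible_action_def by blast+
  have "\<alpha> t = (\<lambda>a. cstar u * a * u)"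
    using inner_if_Ad_right_covariant[OF bimod full_r _ _ cov_r Ad] uu by blast
  moreover have "\<beta> t = (\<lambda>b. cstar u' * b * u')"
    using inner_if_Ad_left_covariant[OF bimod full_l _ _ cov_l Ad] uu by blast
  ultimately show False
    using assms(6) t uu unfolding outer_action_def by blast
qed

end
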